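(* Let $G$ be an $r$-regular graph on $n$ vertices, where $n$ is even, and let $A$ be an Abelian group of order $n$ having exactly one involution (element of order 2). If $G$ is $A$-distance antimagic, then $r$ is odd.
   Context: All groups are finite Abelian, written additively. Let $G$ be a finite simple graph with $n$ vertices and $A$ an Abelian group of order $n$. For a bijection $f: V(G)\to A$, the weight of a vertex $x$ is $w_f(x)=\sum_{y\in N(x)} f(y)$, computed in $A$, where $N(x)$ is the open neighbourhood of $x$. $f$ is an $A$-distance antimagic labelling if the weights of all vertices are pairwise distinct; $f$ is an $A$-distance magic labelling if all vertices have the same weight (the magic constant). $G$ is $A$-distance antimagic (resp. magic) if it admits such a labelling. *)

theory Defs
  imports Main
begin

definition simple_graph :: "'a set \<Rightarrow> ('a \<Rightarrow> 'a \<Rightarrow> bool) \<Rightarrow> bool" where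
  "simple_graph V E \<longleftrightarrow> finite V \<and> (\<forall>x y. E x y \<longrightarrow> x \<in> V \<and> y \<in> V)
     \<and> (\<forall>x y. E x y \<longrightarrow> E y x) \<and> (\<forall>x. \<not> E x x)"

definition nbhd :: "'a set \<Rightarrow> ('a \<Rightarrow> 'a \<Rightarrow> bool) \<Rightarrow> 'a \<Rightarrow> 'a set" where
  "nbhd V E x = {y \<in> V. E x y}"

definition regular :: "'a set \<Rightarrow> ('a \<Rightarrow> 'a \<Rightarrow> bool) \<Rightarrow> nat \<Rightarrow> bool" where
  "regular V E r \<longleftrightarrow> (\<forall>x\<in>V. card (nbhd V E x) = r)"

definition weight :: "'a set \<Rightarrow> ('a \<Rightarrow> 'a \<Rightarrow> bool) \<Rightarrow> ('a \<Rightarrow> 'b::ab_group_add) \<Rightarrow> 'a \<Rightarrow> 'b" where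
  "weight V E f x = (\<Sum>y\<in>nbhd V E x. f y)"

definition A_distance_antimagic_labelling ::
  "'a set \<Rightarrow> ('a \<Rightarrow> 'a \<Rightarrow> bool) \<Rightarrow> ('a \<Rightarrow> 'b::ab_group_add) \<Rightarrow> bool" where
  "A_distance_antimagic_labelling V E f \<longleftrightarrow>
     bij_betw f V (UNIV :: 'b set) \<and> inj_on (weight V E f) V"

definition A_distance_antimagic ::
  "'a set \<Rightarrow> ('a \<Rightarrow> 'a \<Rightarrow> bool) \<Rightarrow> 'b::ab_group_add itself \<Rightarrow> bool" where
  "A_distance_antimagic V E _ \<longleftrightarrow> (\<exists>f :: 'a \<Rightarrow> 'b. A_distance_antimagic_labelling V E f)"

definition involutions :: "'b::ab_group_add set" where
  "involutions = {x. x \<noteq> 0 \<and> x + x = 0}"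

end

theory Submission
  imports Defs "HOL-Library.Disjoint_Sets"
begin

text \<open>Pairing every element of a finite Abelian group with its inverse shows that the sum of
  all elements is the sum of the elements of order at most 2; with a unique involution \<open>i\<close>
  this sum is \<open>i\<close>. In an \<open>r\<close>-regular graph every label is counted \<open>r\<close> times in the
  total weight, and for an antimagic labelling both the labels and the weights run through the
  whole group, so \<open>r \<cdot> i = i\<close>. As \<open>i\<close> has order 2, \<open>r\<close> is odd.\<close>

lemma sum_UNIV_eq_sum_self_inverse:
  "(\<Sum>x\<in>UNIV. x) = (\<Sum>x\<in>{x. x + x = 0}. x :: 'b::{ab_group_add, finite})"
proof -
  let ?S = "{x :: 'b. x + x = 0}"
  have neg_self_inverse: "- x + - x = 0 \<longleftrightarrow> x + x = 0" for x :: 'b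
    by (metis minus_add_distrib neg_equal_0_iff_equal)
  have "(\<Sum>x\<in>UNIV - ?S. x) = 0"
  proof (rule sum_involution_eq_0[where h = uminus])
    fix x assume "x \<in> UNIV - ?S"
    then show "- x \<in> UNIV - ?S" "- x \<noteq> x"
      using neg_self_inverse by (auto simp: minus_equation_iff)
  qed simp_all
  moreover have "(\<Sum>x\<in>UNIV. x) = (\<Sum>x\<in>?S. x) + (\<Sum>x\<in>UNIV - ?S. x)"
    by (simp add: sum.subset_diff[of ?S UNIV])
  ultimately show ?thesis by simp
qed

lemma sum_UNIV_eq_unique_involution:
  assumes "involutions = {i :: 'b::{ab_group_add, finite}}"
  shows "(\<Sum>x\<in>UNIV. x) = i"
proof -
  have inv: "x \<noteq> 0 \<and> x + x = 0 \<longleftrightarrow> x = i" for x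
    using assms[unfolded involutions_def, THEN eqset_imp_iff, of x] by simp
  then have "i \<noteq> 0" "i + i = 0" by blast+
  have "x + x = 0 \<longleftrightarrow> x = 0 \<or> x = i" for x
    using inv[of x] \<open>i + i = 0\<close> by auto
  then have "{x :: 'b. x + x = 0} = {0, i}" by blast
  with \<open>i \<noteq> 0\<close> show ?thesis
    by (simp add: sum_UNIV_eq_sum_self_inverse)
qed

lemma sum_const_self_inverse:
  assumes "c + c = (0 :: 'b::ab_group_add)"
  shows "(\<Sum>_\<in>B. c) = (if even (card B) then 0 else c)"
proof (cases "finite B")
  case True
  then show ?thesis
  proof (induction B rule: finite_induct)
    case (insert x F)
    then show ?case
      using assms by (simp add: add.commute)
  qed simp
qed simp

lemma sum_const_eq_if_card_eq:
  assumes "finite A" "finite B" "card A = card B"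
  shows "(\<Sum>_\<in>A. c) = (\<Sum>_\<in>B. c :: 'b::comm_monoid_add)"
proof -
  obtain h where "bij_betw h A B"
    using assms finite_same_card_bij by blast
  from sum.reindex_bij_betw[OF this, of "\<lambda>_. c"] show ?thesis by simp
qed

lemma sum_weight_regular:
  assumes "simple_graph V E" "regular V E r"
  shows "(\<Sum>x\<in>V. weight V E f x) = (\<Sum>_<r. \<Sum>y\<in>V. f y)"
proof -
  have fin: "finite V" using assms(1) unfolding simple_graph_def by simp
  have sym: "{x\<in>V. E x y} = nbhd V E y" for y
    using assms(1) unfolding simple_graph_def nbhd_def by blast
  have "(\<Sum>x\<in>V. weight V E f x) = (\<Sum>x\<in>V. \<Sum>y\<in>{y\<in>V. E x y}. f y)"
    unfolding weight_def nbhd_def ..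
  also have "\<dots> = (\<Sum>y\<in>V. \<Sum>_\<in>nbhd V E y. f y)"
    unfolding sum.swap_restrict[OF fin fin] sym ..
  also have "\<dots> = (\<Sum>y\<in>V. \<Sum>_<r. f y)"
  proof (rule sum.cong[OF refl])
    fix y assume "y \<in> V"
    then have "card (nbhd V E y) = card {..<r}"
      using assms(2) unfolding regular_def by simp
    then show "(\<Sum>_\<in>nbhd V E y. f y) = (\<Sum>_<r. f y)"
      using fin by (intro sum_const_eq_if_card_eq) (auto simp: nbhd_def)
  qed
  also have "\<dots> = (\<Sum>_<r. \<Sum>y\<in>V. f y)"
    by (rule sum.swap)
  finally show ?thesis .
qed

lemma sum_bij_betw_UNIV:
  assumes "bij_betw f V (UNIV :: 'b::{comm_monoid_add, finite} set)"
  shows "(\<Sum>x\<in>V. f x) = (\<Sum>x\<in>UNIV. x)"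
  using sum.reindex_bij_betw[OF assms, of "\<lambda>x. x"] by simp

lemma antimagic_weights_bij:
  assumes "A_distance_antimagic_labelling V E (f :: 'a \<Rightarrow> 'b::{ab_group_add, finite})"
    and "finite V"
  shows "bij_betw (weight V E f) V UNIV"
proof -
  have "card V = card (UNIV :: 'b set)" "inj_on (weight V E f) V"
    using assms(1) bij_betw_same_card unfolding A_distance_antimagic_labelling_def by blast+
  then show ?thesis
    by (simp add: bij_betw_def card_image card_subset_eq)
qed

theorem mainTheorem1:
  fixes V :: "'a set" and E :: "'a \<Rightarrow> 'a \<Rightarrow> bool" and r n :: nat
    and A :: "'b::{ab_group_add, finite} itself"
  assumes "simple_graph V E"
    and "card V = n"
    and "regular V E r"
    and "even n"
    and "card (UNIV :: 'b set) = n"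
    and "card (involutions :: 'b set) = 1"
    and "A_distance_antimagic V E A"
  shows "odd r"
proof -
  obtain f :: "'a \<Rightarrow> 'b" where f: "A_distance_antimagic_labelling V E f"
    using assms(7) unfolding A_distance_antimagic_def by blast
  obtain i :: 'b where i: "involutions = {i}"
    using assms(6) card_1_singletonE by blast
  have i_order: "i \<noteq> 0" "i + i = 0"
    using i unfolding involutions_def by auto
  have "finite V" using assms(1) unfolding simple_graph_def by simp
  have labels: "bij_betw f V UNIV"
    using f unfolding A_distance_antimagic_labelling_def by blast
  have "i = (\<Sum>x\<in>V. weight V E f x)"
    using sum_bij_betw_UNIV[OF antimagic_weights_bij[OF f \<open>finite V\<close>]]
    by (simp add: sum_UNIV_eq_unique_involution[OF i])
  also have "\<dots> = (\<Sum>_<r. \<Sum>y\<in>V. f y)"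
    by (rule sum_weight_regular[OF assms(1,3)])
  also have "\<dots> = (\<Sum>_<r. i)"
    by (simp add: sum_bij_betw_UNIV[OF labels] sum_UNIV_eq_unique_involution[OF i])
  also have "\<dots> = (if even r then 0 else i)"
    using sum_const_self_inverse[OF i_order(2), of "{..<r}"] by simp
  finally have "i = (if even r then 0 else i)" .
  then show "odd r"
    using i_order(1) by (metis (full_types))
qed

end
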